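(* Let $\mathbb{K}=(G,M,I)$ be a finite formal context with concept lattice $\underline{\mathfrak{B}}(\mathbb{K})$ and let $\underline{S}=\{s\}$ be an interval of $\underline{\mathfrak{B}}(\mathbb{K})$ with $|\underline{S}|=1$. Then $\underline{S}$ is quasi-dismantling for $\underline{\mathfrak{B}}(\mathbb{K})$ if and only if one of the following holds: $s$ is doubly irreducible; or $s=\top$ and $s$ is supremum-irreducible; or $s=\bot$ and $s$ is infimum-irreducible; or $s=\top=\bot$.
   Context: For $u\le v$ in a lattice $L$, $[u,v]=\{x\mid u\le x\le v\}$, $(v]=\{x\mid x\le v\}$, $[u)=\{x\mid u\le x\}$. An interval $[u,v]$ of $L$ is quasi-dismantling for $L$ if $u$ is supremum-prime in $(v]$ (for all $x,y\in(v]$, $u\le x\vee y$ implies $u\le x$ or $u\le y$) and $v$ is infimum-prime in $[u)$ (for all $x,y\in[u)$, $x\wedge y\le v$ implies $x\le v$ or $y\le v$). An element of a finite lattice is supremum-irreducible if it has exactly one lower neighbor, infimum-irreducible if it has exactly one upper neighbor, doubly irreducible if both. $\top,\bot$ denote the greatest and least elements of $\underline{\mathfrak{B}}(\mathbb{K})$. The concept lattice is the set of formal concepts $(A,B)$ ($A'=B$, $B'=A$) ordered by inclusion of extents. *)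

theory Defs
  imports Main
begin

definition intent_of :: "'g set \<Rightarrow> 'm set \<Rightarrow> ('g \<times> 'm) set \<Rightarrow> 'g set \<Rightarrow> 'm set" where
  "intent_of G M I A = {m \<in> M. \<forall>g\<in>A. (g, m) \<in> I}"

definition extent_of :: "'g set \<Rightarrow> 'm set \<Rightarrow> ('g \<times> 'm) set \<Rightarrow> 'm set \<Rightarrow> 'g set" where
  "extent_of G M I B = {g \<in> G. \<forall>m\<in>B. (g, m) \<in> I}"

definition concepts :: "'g set \<Rightarrow> 'm set \<Rightarrow> ('g \<times> 'm) set \<Rightarrow> ('g set \<times> 'm set) set" where
  "concepts G M I = {(A, B). A \<subseteq> G \<and> B \<subseteq> M \<and> intent_of G M I A = B \<and> extent_of G M I B = A}"

definition concept_le :: "('g set \<times> 'm set) \<Rightarrow> ('g set \<times> 'm set) \<Rightarrow> bool" where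
  "concept_le c d \<longleftrightarrow> fst c \<subseteq> fst d"

definition lsup :: "'a set \<Rightarrow> ('a \<Rightarrow> 'a \<Rightarrow> bool) \<Rightarrow> 'a \<Rightarrow> 'a \<Rightarrow> 'a" where
  "lsup L le x y = (THE z. z \<in> L \<and> le x z \<and> le y z \<and> (\<forall>w\<in>L. le x w \<and> le y w \<longrightarrow> le z w))"

definition linf :: "'a set \<Rightarrow> ('a \<Rightarrow> 'a \<Rightarrow> bool) \<Rightarrow> 'a \<Rightarrow> 'a \<Rightarrow> 'a" where
  "linf L le x y = (THE z. z \<in> L \<and> le z x \<and> le z y \<and> (\<forall>w\<in>L. le w x \<and> le w y \<longrightarrow> le w z))"

definition interval :: "'a set \<Rightarrow> ('a \<Rightarrow> 'a \<Rightarrow> bool) \<Rightarrow> 'a \<Rightarrow> 'a \<Rightarrow> 'a set" where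
  "interval L le u v = {x \<in> L. le u x \<and> le x v}"

definition sup_prime_in_down :: "'a set \<Rightarrow> ('a \<Rightarrow> 'a \<Rightarrow> bool) \<Rightarrow> 'a \<Rightarrow> 'a \<Rightarrow> bool" where
  "sup_prime_in_down L le u v \<longleftrightarrow>
     (\<forall>x\<in>L. \<forall>y\<in>L. le x v \<and> le y v \<longrightarrow> le u (lsup L le x y) \<longrightarrow> le u x \<or> le u y)"

definition inf_prime_in_up :: "'a set \<Rightarrow> ('a \<Rightarrow> 'a \<Rightarrow> bool) \<Rightarrow> 'a \<Rightarrow> 'a \<Rightarrow> bool" where
  "inf_prime_in_up L le v u \<longleftrightarrow>
     (\<forall>x\<in>L. \<forall>y\<in>L. le u x \<and> le u y \<longrightarrow> le (linf L le x y) v \<longrightarrow> le x v \<or> le y v)"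

definition quasi_dismantling :: "'a set \<Rightarrow> ('a \<Rightarrow> 'a \<Rightarrow> bool) \<Rightarrow> 'a \<Rightarrow> 'a \<Rightarrow> bool" where
  "quasi_dismantling L le u v \<longleftrightarrow> sup_prime_in_down L le u v \<and> inf_prime_in_up L le v u"

definition lower_neighbor :: "'a set \<Rightarrow> ('a \<Rightarrow> 'a \<Rightarrow> bool) \<Rightarrow> 'a \<Rightarrow> 'a \<Rightarrow> bool" where
  "lower_neighbor L le x y \<longleftrightarrow> x \<in> L \<and> y \<in> L \<and> le x y \<and> x \<noteq> y \<and>
     \<not> (\<exists>z\<in>L. le x z \<and> le z y \<and> z \<noteq> x \<and> z \<noteq> y)"

definition sup_irreducible :: "'a set \<Rightarrow> ('a \<Rightarrow> 'a \<Rightarrow> bool) \<Rightarrow> 'a \<Rightarrow> bool" where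
  "sup_irreducible L le s \<longleftrightarrow> card {x. lower_neighbor L le x s} = 1"

definition inf_irreducible :: "'a set \<Rightarrow> ('a \<Rightarrow> 'a \<Rightarrow> bool) \<Rightarrow> 'a \<Rightarrow> bool" where
  "inf_irreducible L le s \<longleftrightarrow> card {y. lower_neighbor L le s y} = 1"

definition doubly_irreducible :: "'a set \<Rightarrow> ('a \<Rightarrow> 'a \<Rightarrow> bool) \<Rightarrow> 'a \<Rightarrow> bool" where
  "doubly_irreducible L le s \<longleftrightarrow> sup_irreducible L le s \<and> inf_irreducible L le s"

definition is_top :: "'a set \<Rightarrow> ('a \<Rightarrow> 'a \<Rightarrow> bool) \<Rightarrow> 'a \<Rightarrow> bool" where
  "is_top L le s \<longleftrightarrow> s \<in> L \<and> (\<forall>x\<in>L. le x s)"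

definition is_bot :: "'a set \<Rightarrow> ('a \<Rightarrow> 'a \<Rightarrow> bool) \<Rightarrow> 'a \<Rightarrow> bool" where
  "is_bot L le s \<longleftrightarrow> s \<in> L \<and> (\<forall>x\<in>L. le s x)"

end

theory Submission
  imports Defs
begin

text \<open>In a finite lattice every element strictly below \<open>s\<close> lies below some lower neighbour
of \<open>s\<close>. Two distinct lower neighbours of \<open>s\<close> join to \<open>s\<close>, so supremum-primeness of \<open>s\<close>
in \<open>(s]\<close> forbids them; conversely a unique lower neighbour lies above everything strictly
below \<open>s\<close>, hence above every join of such elements. So \<open>s\<close> is supremum-prime in \<open>(s]\<close> iff it
is the bottom or supremum-irreducible, and dually for infimum-primeness in \<open>[s)\<close>. A one-element
interval \<open>[u, v]\<close> forces \<open>u = v = s\<close>, and concept lattices of finite contexts are finite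
lattices.\<close>

locale finite_lattice_on =
  fixes L :: "'a set" and le :: "'a \<Rightarrow> 'a \<Rightarrow> bool"
  assumes finite_carrier: "finite L"
    and refl: "x \<in> L \<Longrightarrow> le x x"
    and antisym: "x \<in> L \<Longrightarrow> y \<in> L \<Longrightarrow> le x y \<Longrightarrow> le y x \<Longrightarrow> x = y"
    and trans: "x \<in> L \<Longrightarrow> y \<in> L \<Longrightarrow> z \<in> L \<Longrightarrow> le x y \<Longrightarrow> le y z \<Longrightarrow> le x z"
    and sup_exists: "x \<in> L \<Longrightarrow> y \<in> L \<Longrightarrow>
      \<exists>z\<in>L. le x z \<and> le y z \<and> (\<forall>w\<in>L. le x w \<and> le y w \<longrightarrow> le z w)"
    and inf_exists: "x \<in> L \<Longrightarrow> y \<in> L \<Longrightarrow>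
      \<exists>z\<in>L. le z x \<and> le z y \<and> (\<forall>w\<in>L. le w x \<and> le w y \<longrightarrow> le w z)"

lemma finite_lattice_on_dual:
  assumes "finite_lattice_on L le"
  shows "finite_lattice_on L (\<lambda>x y. le y x)"
proof -
  interpret finite_lattice_on L le by fact
  show ?thesis
    by unfold_locales (use finite_carrier refl antisym trans sup_exists inf_exists in blast)+
qed

context finite_lattice_on
begin

sublocale dual: finite_lattice_on L "\<lambda>x y. le y x"
  by (rule finite_lattice_on_dual) unfold_locales

lemma lsup_lub:
  assumes "x \<in> L" "y \<in> L"
  shows lsup_closed: "lsup L le x y \<in> L"
    and lsup_upper1: "le x (lsup L le x y)"
    and lsup_upper2: "le y (lsup L le x y)"
    and lsup_least: "\<And>w. w \<in> L \<Longrightarrow> le x w \<Longrightarrow> le y w \<Longrightarrow> le (lsup L le x y) w"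
proof -
  have "\<exists>!z. z \<in> L \<and> le x z \<and> le y z \<and> (\<forall>w\<in>L. le x w \<and> le y w \<longrightarrow> le z w)"
    using sup_exists[OF assms] antisym by blast
  from theI'[OF this, folded lsup_def]
  show "lsup L le x y \<in> L" "le x (lsup L le x y)" "le y (lsup L le x y)"
    "\<And>w. w \<in> L \<Longrightarrow> le x w \<Longrightarrow> le y w \<Longrightarrow> le (lsup L le x y) w"
    by blast+
qed

lemma lower_neighborD:
  assumes "lower_neighbor L le a s"
  shows "a \<in> L" "s \<in> L" "le a s" "a \<noteq> s"
    and "\<And>z. z \<in> L \<Longrightarrow> le a z \<Longrightarrow> le z s \<Longrightarrow> z = a \<or> z = s"
  using assms unfolding lower_neighbor_def by blast+

lemma lower_neighbor_above:
  assumes "x \<in> L" "s \<in> L" "le x s" "x \<noteq> s"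
  obtains c where "lower_neighbor L le c s" "le x c"
proof -
  define S where "S = {z \<in> L. le x z \<and> le z s \<and> z \<noteq> s}"
  have "asymp_on S (\<lambda>a b. le a b \<and> a \<noteq> b)"
    unfolding S_def by (auto dest: antisym)
  moreover have "transp_on S (\<lambda>a b. le a b \<and> a \<noteq> b)"
    unfolding S_def by (intro transp_onI) (blast intro: trans dest: antisym)
  moreover have "x \<in> S"
    unfolding S_def using assms refl by blast
  moreover have "finite S"
    unfolding S_def using finite_carrier by simp
  ultimately obtain c where c: "c \<in> S" and maximal: "\<forall>z\<in>S. z \<noteq> c \<longrightarrow> \<not> (le c z \<and> c \<noteq> z)"
    using Finite_Set.bex_max_element[of S] by blast
  have "lower_neighbor L le c s"
    using c maximal assms(1,2) unfolding lower_neighbor_def S_def by (blast intro: trans)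
  with c show thesis unfolding S_def by (intro that) auto
qed

lemma lower_neighbor_exists:
  assumes "s \<in> L" "\<not> is_bot L le s"
  obtains a where "lower_neighbor L le a s"
proof -
  obtain x where x: "x \<in> L" "\<not> le s x"
    using assms unfolding is_bot_def by blast
  obtain m where m: "m \<in> L" "le m s" "le m x"
    using inf_exists[OF assms(1) x(1)] by blast
  have "m \<noteq> s"
    using m x by blast
  then show thesis
    using lower_neighbor_above[OF m(1) assms(1) m(2)] that by blast
qed

lemma lsup_distinct_lower_neighbors:
  assumes a: "lower_neighbor L le a s" and b: "lower_neighbor L le b s" and "a \<noteq> b"
  shows "lsup L le a b = s"
proof -
  let ?j = "lsup L le a b"
  have j: "?j \<in> L" "le a ?j" "le b ?j" "le ?j s"
    using lsup_lub[OF lower_neighborD(1)[OF a] lower_neighborD(1)[OF b]]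
      lower_neighborD(2-3)[OF a] lower_neighborD(3)[OF b] by blast+
  have "?j \<noteq> a"
  proof
    assume "?j = a"
    then have "le b a"
      using j(3) by simp
    then show False
      using lower_neighborD(1,4,5)[OF b] lower_neighborD(1,3,4)[OF a] \<open>a \<noteq> b\<close> by blast
  qed
  then show ?thesis
    using lower_neighborD(5)[OF a j(1,2,4)] by blast
qed

lemma sup_irreducible_if_sup_prime:
  assumes s: "s \<in> L" and prime: "sup_prime_in_down L le s s" and not_bot: "\<not> is_bot L le s"
  shows "sup_irreducible L le s"
proof -
  obtain a where a: "lower_neighbor L le a s"
    using lower_neighbor_exists[OF s not_bot] .
  have "b = a" if b: "lower_neighbor L le b s" for b
  proof (rule ccontr)
    assume "b \<noteq> a"
    then have "le s (lsup L le a b)"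
      using lsup_distinct_lower_neighbors[OF a b] refl[OF s] by simp
    then have "le s a \<or> le s b"
      using prime lower_neighborD(1,3)[OF a] lower_neighborD(1,3)[OF b]
      unfolding sup_prime_in_down_def by blast
    then show False
      using antisym s lower_neighborD(1,3,4)[OF a] lower_neighborD(1,3,4)[OF b] by blast
  qed
  with a have "{x. lower_neighbor L le x s} = {a}"
    by blast
  then show ?thesis
    unfolding sup_irreducible_def by simp
qed

lemma sup_irreducible_greatest_below:
  assumes irr: "sup_irreducible L le s"
  obtains a where "lower_neighbor L le a s"
    and "\<And>z. z \<in> L \<Longrightarrow> le z s \<Longrightarrow> z \<noteq> s \<Longrightarrow> le z a"
proof -
  obtain a where unique: "{x. lower_neighbor L le x s} = {a}"
    using irr unfolding sup_irreducible_def by (rule card_1_singletonE)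
  then have a: "lower_neighbor L le a s"
    by blast
  have "le z a" if z: "z \<in> L" "le z s" "z \<noteq> s" for z
  proof -
    obtain c where "lower_neighbor L le c s" "le z c"
      using lower_neighbor_above[OF z(1) lower_neighborD(2)[OF a] z(2,3)] .
    with unique show ?thesis
      by (metis mem_Collect_eq singletonD)
  qed
  with a show thesis
    by (rule that)
qed

lemma sup_prime_if_sup_irreducible:
  assumes s: "s \<in> L" and irr: "sup_irreducible L le s"
  shows "sup_prime_in_down L le s s"
  unfolding sup_prime_in_down_def
proof (intro ballI impI)
  fix x y
  assume xy: "x \<in> L" "y \<in> L" "le x s \<and> le y s" and s_le: "le s (lsup L le x y)"
  obtain a where a: "lower_neighbor L le a s"
    and greatest: "\<And>z. z \<in> L \<Longrightarrow> le z s \<Longrightarrow> z \<noteq> s \<Longrightarrow> le z a"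
    using sup_irreducible_greatest_below[OF irr] by blast
  show "le s x \<or> le s y"
  proof (rule ccontr)
    assume "\<not> (le s x \<or> le s y)"
    then have "x \<noteq> s" "y \<noteq> s"
      using refl[OF s] by blast+
    then have "le (lsup L le x y) a"
      using lsup_least[OF xy(1,2) lower_neighborD(1)[OF a]] greatest xy by blast
    then have "le s a"
      using trans[OF s lsup_closed[OF xy(1,2)] lower_neighborD(1)[OF a] s_le] by blast
    then show False
      using antisym[OF lower_neighborD(1)[OF a] s] lower_neighborD(3,4)[OF a] by blast
  qed
qed

lemma sup_prime_self_iff:
  assumes "s \<in> L"
  shows "sup_prime_in_down L le s s \<longleftrightarrow> is_bot L le s \<or> sup_irreducible L le s"
proof -
  have "sup_prime_in_down L le s s" if "is_bot L le s"
    using that unfolding sup_prime_in_down_def is_bot_def by blast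
  then show ?thesis
    using sup_irreducible_if_sup_prime[OF assms] sup_prime_if_sup_irreducible[OF assms] by blast
qed

end

lemma lsup_dual: "lsup L (\<lambda>x y. le y x) = linf L le"
  by (intro ext) (simp add: lsup_def linf_def)

lemma inf_prime_in_up_eq_dual:
  "inf_prime_in_up L le v u \<longleftrightarrow> sup_prime_in_down L (\<lambda>x y. le y x) v u"
  by (simp add: inf_prime_in_up_def sup_prime_in_down_def lsup_dual)

lemma lower_neighbor_dual: "lower_neighbor L (\<lambda>x y. le y x) x y \<longleftrightarrow> lower_neighbor L le y x"
  unfolding lower_neighbor_def by auto

lemma inf_irreducible_eq_dual: "inf_irreducible L le s \<longleftrightarrow> sup_irreducible L (\<lambda>x y. le y x) s"
  unfolding inf_irreducible_def sup_irreducible_def lower_neighbor_dual[of L le _ s] ..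

lemma is_top_eq_dual: "is_top L le s \<longleftrightarrow> is_bot L (\<lambda>x y. le y x) s"
  by (simp add: is_top_def is_bot_def)

context finite_lattice_on
begin

lemma inf_prime_self_iff:
  assumes "s \<in> L"
  shows "inf_prime_in_up L le s s \<longleftrightarrow> is_top L le s \<or> inf_irreducible L le s"
  unfolding inf_prime_in_up_eq_dual inf_irreducible_eq_dual is_top_eq_dual
  by (rule dual.sup_prime_self_iff[OF assms])

lemma quasi_dismantling_self_iff:
  assumes "s \<in> L"
  shows "quasi_dismantling L le s s \<longleftrightarrow>
    doubly_irreducible L le s \<or> (is_top L le s \<and> sup_irreducible L le s)
    \<or> (is_bot L le s \<and> inf_irreducible L le s) \<or> (is_top L le s \<and> is_bot L le s)"
  unfolding quasi_dismantling_def doubly_irreducible_def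
    sup_prime_self_iff[OF assms] inf_prime_self_iff[OF assms]
  by blast

end

lemma concept_of_attributes:
  assumes "B \<subseteq> M"
  shows "(extent_of G M I B, intent_of G M I (extent_of G M I B)) \<in> concepts G M I"
  using assms unfolding concepts_def intent_of_def extent_of_def by blast

lemma extent_of_antimono: "B \<subseteq> B' \<Longrightarrow> extent_of G M I B' \<subseteq> extent_of G M I B"
  unfolding extent_of_def by blast

lemma intent_of_antimono: "A \<subseteq> A' \<Longrightarrow> intent_of G M I A' \<subseteq> intent_of G M I A"
  unfolding intent_of_def by blast

lemma extent_of_Un: "extent_of G M I (B \<union> B') = extent_of G M I B \<inter> extent_of G M I B'"
  unfolding extent_of_def by blast

lemma finite_lattice_on_concepts:
  assumes "finite G" "finite M"
  shows "finite_lattice_on (concepts G M I) concept_le"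
proof
  show "finite (concepts G M I)"
    by (rule finite_subset[of _ "Pow G \<times> Pow M"]) (auto simp: concepts_def assms)
next
  fix x y
  assume x: "x \<in> concepts G M I" and y: "y \<in> concepts G M I"
  obtain A1 B1 A2 B2 where xy: "x = (A1, B1)" "y = (A2, B2)"
    by fastforce
  then have M: "B1 \<subseteq> M" "B2 \<subseteq> M"
    and A: "A1 = extent_of G M I B1" "A2 = extent_of G M I B2"
    and B: "B1 = intent_of G M I A1" "B2 = intent_of G M I A2"
    using x y by (auto simp: concepts_def)
  show "concept_le x y \<Longrightarrow> concept_le y x \<Longrightarrow> x = y"
    using xy B by (simp add: concept_le_def)
  let ?A = "extent_of G M I (B1 \<inter> B2)"
  show "\<exists>z\<in>concepts G M I. concept_le x z \<and> concept_le y z \<and>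
      (\<forall>w\<in>concepts G M I. concept_le x w \<and> concept_le y w \<longrightarrow> concept_le z w)"
  proof (intro bexI conjI ballI impI)
    show "(?A, intent_of G M I ?A) \<in> concepts G M I"
      using M by (intro concept_of_attributes) blast
    have "A1 \<subseteq> ?A" "A2 \<subseteq> ?A"
      unfolding A by (rule extent_of_antimono; blast)+
    then show "concept_le x (?A, intent_of G M I ?A)" "concept_le y (?A, intent_of G M I ?A)"
      using xy by (auto simp: concept_le_def)
    fix w
    assume w: "w \<in> concepts G M I" "concept_le x w \<and> concept_le y w"
    obtain A B where wAB: "w = (A, B)"
      by fastforce
    then have AB: "A1 \<subseteq> A" "A2 \<subseteq> A" "B = intent_of G M I A" "A = extent_of G M I B"
      using w xy by (auto simp: concepts_def concept_le_def)
    have "B \<subseteq> B1 \<inter> B2"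
      unfolding B AB(3) using AB(1,2) by (intro Int_greatest intent_of_antimono)
    then have "?A \<subseteq> A"
      unfolding AB(4) by (rule extent_of_antimono)
    then show "concept_le (?A, intent_of G M I ?A) w"
      using wAB by (simp add: concept_le_def)
  qed
  let ?A' = "extent_of G M I (B1 \<union> B2)"
  show "\<exists>z\<in>concepts G M I. concept_le z x \<and> concept_le z y \<and>
      (\<forall>w\<in>concepts G M I. concept_le w x \<and> concept_le w y \<longrightarrow> concept_le w z)"
  proof (rule bexI)
    show "(?A', intent_of G M I ?A') \<in> concepts G M I"
      using M by (intro concept_of_attributes) blast
    show "concept_le (?A', intent_of G M I ?A') x \<and> concept_le (?A', intent_of G M I ?A') y \<and>
      (\<forall>w\<in>concepts G M I. concept_le w x \<and> concept_le w y \<longrightarrow> concept_le w (?A', intent_of G M I ?A'))"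
      using xy A by (auto simp: concept_le_def extent_of_Un)
  qed
qed (auto simp: concept_le_def)

theorem proposition3:
  fixes G :: "'g set" and M :: "'m set" and I :: "('g \<times> 'm) set"
    and u v s :: "'g set \<times> 'm set"
  assumes "finite G" and "finite M" and "I \<subseteq> G \<times> M"
    and "u \<in> concepts G M I" and "v \<in> concepts G M I" and "concept_le u v"
    and "interval (concepts G M I) concept_le u v = {s}"
  shows "quasi_dismantling (concepts G M I) concept_le u v \<longleftrightarrow>
           (doubly_irreducible (concepts G M I) concept_le s
            \<or> (is_top (concepts G M I) concept_le s \<and> sup_irreducible (concepts G M I) concept_le s)
            \<or> (is_bot (concepts G M I) concept_le s \<and> inf_irreducible (concepts G M I) concept_le s)
            \<or> (is_top (concepts G M I) concept_le s \<and> is_bot (concepts G M I) concept_le s))"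
proof -
  interpret finite_lattice_on "concepts G M I" concept_le
    using finite_lattice_on_concepts[OF assms(1,2)] .
  have "u \<in> interval (concepts G M I) concept_le u v" "v \<in> interval (concepts G M I) concept_le u v"
    using assms(4-6) refl unfolding interval_def by auto
  then have "u = s" "v = s"
    using assms(7) by auto
  with assms(4) show ?thesis
    using quasi_dismantling_self_iff by simp
qed

end
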